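(* For every integer $n\ge1$, $$\frac{\sqrt{12}\,e^{\mu(n)}}{24n-1}\left(1-\frac{1}{\mu(n)}\right)=\frac{e^{\pi\sqrt{2n/3}}}{4n\sqrt3}\sum_{t=0}^\infty \frac{g(t)}{n^{t/2}},$$ where $\mu(n)=\frac{\pi}{6}\sqrt{24n-1}$ and $$g(t)=\frac{1}{(-4\sqrt6)^t}\sum_{k=0}^{\lfloor (t+1)/2\rfloor}\binom{t+1}{k}\frac{t+1-k}{(t+1-2k)!}\left(\frac{\pi}{6}\right)^{t-2k}.$$ *)

theory Defs
  imports "HOL-Analysis.Analysis"
begin

definition mu :: "nat \<Rightarrow> real" where
  "mu n = pi / 6 * sqrt (24 * real n - 1)"

definition gcoef :: "nat \<Rightarrow> real" where
  "gcoef t = (1 / (- 4 * sqrt 6) ^ t) *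
     (\<Sum>k = 0..(t + 1) div 2.
        real ((t + 1) choose k) * (real (t + 1 - k) / fact (t + 1 - 2 * k)) * (pi / 6) powi (int t - 2 * int k))"

end

theory Submission
  imports Defs
begin

(* Put s = sqrt (1 - 1 / (24 n)), z = (1 - s^2) / 4 = 1 / (96 n) and c = - pi / (12 sqrt (24 n)).
   Up to the factor 1 / c, the t-th term of the series is the part  j + 2k = t + 1  of the double series
     sum_j sum_k c^j / j! * (j + k) * C(j + 2k, k) * z^k.
   For fixed j the inner series is a generating function of shifted central binomial coefficients:
   starting from the binomial series of (1 - 4z)^(-1/2) and (1 - 4z)^(-3/2), Pascal's rule gives
   sum_k C(j + 2k, k) z^k = (2 / (1 + s))^j / s, and a similar closed form with the weight j + k.
   The outer series is then exponential and sums to exp (2c / (1 + s)) * (c / s^2 + (1 - s^2) / (2 s^3));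
   the same computation with |c| shows absolute convergence, so the rearrangement is legitimate.
   Since mu n = pi/6 * s * sqrt (24 n), this is the stated identity. *)

lemma central_binomial_Suc_eq_double: "2 * Suc k choose Suc k = 2 * (2 * k + 1 choose k)"
proof -
  have "Suc k * (2 * Suc k choose Suc k) = Suc k * (2 * (2 * k + 1 choose k))"
    using binomial_absorption[of k "2 * Suc k"] by (simp del: binomial_Suc_Suc)
  then show ?thesis
    by (simp only: mult_cancel1) simp
qed

lemma central_binomial_Suc:
  "Suc k * (2 * Suc k choose Suc k) = 2 * (2 * k + 1) * (2 * k choose k)"
proof -
  have absorb: "Suc k * (2 * k + 1 choose k) = (2 * k + 1) * (2 * k choose k)"
    using binomial_absorb_comp[of "2 * k + 1" k] by (simp add: Suc_diff_le del: binomial_Suc_Suc)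
  have "Suc k * (2 * Suc k choose Suc k) = 2 * (Suc k * (2 * k + 1 choose k))"
    unfolding central_binomial_Suc_eq_double by (rule mult.left_commute)
  then show ?thesis
    unfolding absorb by (simp only: mult.assoc)
qed

lemma gbinomial_minus_half: "((-1/2::real) gchoose k) * (-4) ^ k = real (2 * k choose k)"
proof (induction k)
  case (Suc k)
  have rec: "real (Suc k) * ((-1/2) gchoose Suc k) = (-1/2 - real k) * ((-1/2::real) gchoose k)"
    using gbinomial_mult_1[of "-1/2::real" k] by (simp add: algebra_simps)
  have "real (Suc k) * (((-1/2) gchoose Suc k) * (-4) ^ Suc k)
      = (-4) * (real (Suc k) * ((-1/2) gchoose Suc k)) * (-4) ^ k"
    by (simp only: power_Suc mult_ac)
  also have "\<dots> = 2 * (2 * real k + 1) * (((-1/2) gchoose k) * (-4) ^ k)"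
    unfolding rec by (simp add: algebra_simps)
  also have "\<dots> = real (Suc k * (2 * Suc k choose Suc k))"
    unfolding Suc.IH central_binomial_Suc by (simp add: algebra_simps)
  finally have "real (Suc k) * (((-1/2) gchoose Suc k) * (-4) ^ Suc k)
      = real (Suc k) * real (2 * Suc k choose Suc k)"
    by (simp only: of_nat_mult)
  then show ?case
    by (subst (asm) mult_left_cancel) simp_all
qed simp

lemma gbinomial_minus_three_halves:
  "((-3/2::real) gchoose k) * (-4) ^ k = (2 * real k + 1) * real (2 * k choose k)"
proof -
  have "(-3/2::real) gchoose k = (2 * real k + 1) * ((-1/2) gchoose k)"
    using gbinomial_absorb_comp[of "-1/2::real" k] by (simp add: algebra_simps)
  then show ?thesis
    using gbinomial_minus_half[of k] by simp
qed

lemma gen_binomial_real_minus_4: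
  fixes z :: real
  assumes "\<bar>z\<bar> < 1/4"
  shows "(\<lambda>k. ((a gchoose k) * (-4) ^ k) * z ^ k) sums (1 - 4 * z) powr a"
proof -
  have "\<bar>-4 * z\<bar> < 1"
    using assms by (simp add: abs_mult)
  from gen_binomial_real[OF this, of a] show ?thesis
    by (simp add: mult.assoc flip: power_mult_distrib)
qed

lemma central_binomial_sums:
  fixes z :: real
  assumes "\<bar>z\<bar> < 1/4"
  shows "(\<lambda>k. real (2 * k choose k) * z ^ k) sums (1 - 4 * z) powr (-1/2)"
  using gen_binomial_real_minus_4[OF assms, of "-1/2"] by (simp only: gbinomial_minus_half)

lemma central_binomial_odd_sums:
  fixes z :: real
  assumes "\<bar>z\<bar> < 1/4"
  shows "(\<lambda>k. (2 * real k + 1) * real (2 * k choose k) * z ^ k) sums (1 - 4 * z) powr (-3/2)"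
  using gen_binomial_real_minus_4[OF assms, of "-3/2"] by (simp only: gbinomial_minus_three_halves)

lemma binomial_diagonal_pascal:
  "Suc j + 2 * Suc k choose Suc k = (j + 2 + 2 * k choose k) + (j + 2 * Suc k choose Suc k)"
proof -
  have "Suc j + 2 * Suc k = Suc (j + 2 + 2 * k)" "j + 2 * Suc k = j + 2 + 2 * k"
    by simp_all
  then show ?thesis
    by (simp only: binomial_Suc_Suc)
qed

lemma powr_square_minus_half:
  fixes s :: real
  assumes "0 < s"
  shows "(s^2) powr (-1/2) = 1 / s" "(s^2) powr (-3/2) = 1 / s^3"
proof -
  have square: "(s^2) powr a = s powr (2 * a)" for a
    unfolding powr_numeral[OF less_imp_le[OF assms], symmetric] powr_powr ..
  show "(s^2) powr (-1/2) = 1 / s" "(s^2) powr (-3/2) = 1 / s^3"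
    unfolding square using assms by (simp_all add: powr_neg_numeral)
qed

lemma shifted_central_binomial_sums:
  fixes s :: real
  assumes s: "0 < s" "s < 1"
  shows "(\<lambda>k. real (j + 2 * k choose k) * ((1 - s^2) / 4) ^ k) sums ((2 / (1 + s)) ^ j / s)"
proof -
  define z where "z = (1 - s^2) / 4"
  define f where "f = (\<lambda>j k. real (j + 2 * k choose k) * z ^ k)"
  have s2: "s^2 < 1"
    using s by (simp add: power_less_one_iff)
  have z: "0 < z" "\<bar>z\<bar> < 1/4"
    using s s2 by (simp_all add: z_def)
  have z_factor: "z = (1 - s) * (1 + s) / 4"
    by (simp add: z_def power2_eq_square algebra_simps)
  have shift: "(\<lambda>k. f j (Suc k)) sums (S - 1)" if "f j sums S" for j S
    using that by (subst sums_Suc_iff) (simp add: f_def)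
  have z_square: "1 - 4 * z = s^2"
    unfolding z_def by (simp add: field_simps)
  have f0: "f 0 sums (1 / s)"
    using central_binomial_sums[OF z(2)] unfolding z_square powr_square_minus_half(1)[OF s(1)]
    by (simp add: f_def)
  have f0_shift: "(\<lambda>k. f 0 (Suc k)) = (\<lambda>k. (2 * z) * f 1 k)"
    using central_binomial_Suc_eq_double by (simp add: f_def mult_ac del: binomial_Suc_Suc)
  have "1 / s - 1 = (2 * z) * (2 / (1 + s) / s)"
    using s unfolding z_factor by (simp add: divide_simps)
  then have "(\<lambda>k. (2 * z) * f 1 k) sums ((2 * z) * (2 / (1 + s) / s))"
    using shift[OF f0] by (simp only: f0_shift)
  then have f1: "f 1 sums (2 / (1 + s) / s)"
    using z by (subst (asm) sums_mult_iff) simp_all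
  have step: "2 / (1 + s) - 1 = z * (2 / (1 + s))^2"
    using s unfolding z_factor by (simp add: divide_simps power2_eq_square)
  have "f j sums ((2 / (1 + s)) ^ j / s)"
  proof (induction j rule: induct_nat_012)
    case (ge2 j)
    have pascal: "(\<lambda>k. f (Suc j) (Suc k) - f j (Suc k)) = (\<lambda>k. z * f (Suc (Suc j)) k)"
      unfolding f_def binomial_diagonal_pascal by (simp add: algebra_simps del: binomial_Suc_Suc)
    have "(2 / (1 + s)) ^ Suc j / s - 1 - ((2 / (1 + s)) ^ j / s - 1)
        = (2 / (1 + s)) ^ j / s * (2 / (1 + s) - 1)"
      by (simp add: algebra_simps diff_divide_distrib)
    also have "\<dots> = z * ((2 / (1 + s)) ^ Suc (Suc j) / s)"
      unfolding step by (simp add: power2_eq_square mult_ac)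
    finally have "(\<lambda>k. z * f (Suc (Suc j)) k) sums (z * ((2 / (1 + s)) ^ Suc (Suc j) / s))"
      using sums_diff[OF shift[OF ge2(2)] shift[OF ge2(1)]] unfolding pascal by (simp only:)
    then show ?case
      using z by (subst (asm) sums_mult_iff) simp_all
  qed (use f0 f1 in simp_all)
  then show ?thesis
    by (simp add: f_def z_def)
qed

lemma central_binomial_weighted_sums:
  fixes s :: real
  assumes s: "0 < s" "s < 1"
  shows "(\<lambda>k. real k * real (2 * k choose k) * ((1 - s^2) / 4) ^ k) sums ((1 - s^2) / (2 * s^3))"
proof -
  define z where "z = (1 - s^2) / 4"
  have "s^2 < 1"
    using s by (simp add: power_less_one_iff)
  then have z: "\<bar>z\<bar> < 1/4"
    using s by (simp add: z_def)
  have z_square: "1 - 4 * z = s^2"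
    unfolding z_def by (simp add: field_simps)
  have "(\<lambda>k. ((2 * real k + 1) * real (2 * k choose k) * z ^ k - real (2 * k choose k) * z ^ k) / 2)
      sums ((1 / s^3 - 1 / s) / 2)"
    using central_binomial_odd_sums[OF z] central_binomial_sums[OF z]
    unfolding z_square powr_square_minus_half[OF s(1)] by (intro sums_divide sums_diff)
  moreover have "(1 / s^3 - 1 / s) / 2 = (1 - s^2) / (2 * s^3)"
    using s by (simp add: divide_simps) (simp add: algebra_simps power2_eq_square power3_eq_cube)
  ultimately show ?thesis
    unfolding z_def[symmetric] by (simp add: algebra_simps)
qed

lemma shifted_central_binomial_weighted_sums:
  fixes s :: real
  assumes s: "0 < s" "s < 1"
  shows "(\<lambda>k. real (j + k) * real (j + 2 * k choose k) * ((1 - s^2) / 4) ^ k) sums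
    ((2 / (1 + s)) ^ j * (real j * ((1 + s) / (2 * s^2)) + (1 - s^2) / (2 * s^3)))"
proof -
  define z where "z = (1 - s^2) / 4"
  define X where "X = 2 / (1 + s)"
  define A where "A = (1 + s) / (2 * s^2)"
  define B where "B = (1 - s^2) / (2 * s^3)"
  define g where "g = (\<lambda>j k. real (j + k) * real (j + 2 * k choose k) * z ^ k)"
  define V where "V = (\<lambda>j. X ^ j * (real j * A + B))"
  have z_factor: "z = (1 - s) * (1 + s) / 4"
    by (simp add: z_def power2_eq_square algebra_simps)
  have z: "z \<noteq> 0"
    using s by (simp add: z_factor)
  have X_step: "X - 1 = z * X^2" and A_step: "A * (2 - X) = 1 / s"
    using s unfolding z_factor X_def A_def by (simp_all add: divide_simps power2_eq_square)
  have shift: "(\<lambda>k. g j (Suc k)) sums (S - real j)" if "g j sums S" for j S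
    using that by (subst sums_Suc_iff) (simp add: g_def)
  have g0: "g 0 sums V 0"
    using central_binomial_weighted_sums[OF s] by (simp add: g_def V_def B_def z_def)
  have g0_shift: "(\<lambda>k. g 0 (Suc k)) = (\<lambda>k. (2 * z) * g 1 k)"
    using central_binomial_Suc_eq_double by (simp add: g_def mult_ac del: binomial_Suc_Suc)
  have "V 0 = (2 * z) * V 1"
    using s unfolding V_def z_factor X_def A_def B_def
    by (simp add: divide_simps) (simp add: algebra_simps power2_eq_square eval_nat_numeral)
  then have "(\<lambda>k. (2 * z) * g 1 k) sums ((2 * z) * V 1)"
    using shift[OF g0] by (simp only: g0_shift of_nat_0 diff_0_right)
  then have g1: "g 1 sums V 1"
    using z by (subst (asm) sums_mult_iff) simp_all
  have shifted_tail: "(\<lambda>k. real (j + 2 * Suc k choose Suc k) * z ^ Suc k) sums (X ^ j / s - 1)"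
    for j
    using shifted_central_binomial_sums[OF s, of j] unfolding z_def[symmetric] X_def[symmetric]
    by (subst sums_Suc_iff) simp
  have "g j sums V j"
  proof (induction j rule: induct_nat_012)
    case (ge2 j)
    have pascal: "(\<lambda>k. g (Suc j) (Suc k) - g j (Suc k) - real (j + 2 * Suc k choose Suc k) * z ^ Suc k)
        = (\<lambda>k. z * g (Suc (Suc j)) k)"
      unfolding g_def binomial_diagonal_pascal by (simp add: algebra_simps del: binomial_Suc_Suc)
    have "X ^ j / s = X ^ j * (A * (2 - X))"
      by (simp add: A_step)
    then have "V (Suc j) - real (Suc j) - (V j - real j) - (X ^ j / s - 1)
        = X ^ j * (X - 1) * ((real j + 2) * A + B)"
      unfolding V_def by (simp add: algebra_simps)
    also have "\<dots> = z * V (Suc (Suc j))"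
      unfolding X_step by (simp add: V_def power2_eq_square algebra_simps)
    finally have limit: "V (Suc j) - real (Suc j) - (V j - real j) - (X ^ j / s - 1)
        = z * V (Suc (Suc j))" .
    have "(\<lambda>k. z * g (Suc (Suc j)) k) sums (z * V (Suc (Suc j)))"
      using sums_diff[OF sums_diff[OF shift[OF ge2(2)] shift[OF ge2(1)]] shifted_tail[of j]]
      unfolding pascal limit .
    then show ?case
      using z by (subst (asm) sums_mult_iff) simp_all
  qed (use g0 g1 in simp_all)
  then show ?thesis
    by (simp add: g_def z_def V_def X_def A_def B_def)
qed

lemma exp_series_affine_sums:
  fixes x a b :: real
  shows "(\<lambda>j. x ^ j / fact j * (real j * a + b)) sums (exp x * (x * a + b))"
proof -
  have exp: "(\<lambda>j. x ^ j / fact j) sums exp x"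
    using exp_converges[of x] by (simp add: divide_inverse mult.commute)
  have "(\<lambda>j. x * (x ^ j / fact j)) sums (x * exp x)"
    by (rule sums_mult[OF exp])
  moreover have "x * (x ^ j / fact j) = real (Suc j) * (x ^ Suc j / fact (Suc j))" for j
    by (simp add: fact_Suc field_simps del: of_nat_Suc)
  ultimately have "(\<lambda>j. real (Suc j) * (x ^ Suc j / fact (Suc j))) sums (x * exp x)"
    by (simp only:)
  then have "(\<lambda>j. real j * (x ^ j / fact j)) sums (x * exp x)"
    by (subst (asm) sums_Suc_iff) simp
  from sums_add[OF sums_mult2[OF this, of a] sums_mult2[OF exp, of b]] show ?thesis
    by (simp add: algebra_simps add_divide_distrib)
qed

lemma summable_on_pairs_by_majorant:
  fixes F G :: "nat \<Rightarrow> nat \<Rightarrow> real"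
  assumes bound: "\<And>j k. \<bar>F j k\<bar> \<le> G j k"
    and inner: "\<And>j. G j sums H j" and outer: "summable H"
  shows "(\<lambda>(j, k). F j k) summable_on UNIV"
proof -
  have G_nonneg: "0 \<le> G j k" for j k
    using bound[of j k] by linarith
  have "(\<lambda>(j, k). G j k) summable_on UNIV \<times> UNIV"
  proof (rule summable_on_SigmaI[where g = H])
    show "((\<lambda>k. (\<lambda>(j, k). G j k) (j, k)) has_sum H j) UNIV" for j
      using sums_nonneg_imp_has_sum[OF inner G_nonneg] by simp
    have "0 \<le> H j" for j
      using suminf_nonneg[OF sums_summable[OF inner] G_nonneg] sums_unique[OF inner] by simp
    then show "H summable_on UNIV"
      using outer by (simp add: summable_on_UNIV_nonneg_real_iff)
  qed (use G_nonneg in auto)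
  then have "(\<lambda>x. norm ((\<lambda>(j, k). F j k) x)) summable_on UNIV \<times> UNIV"
    by (rule summable_on_comparison_test) (use bound in auto)
  then show ?thesis
    by (simp add: abs_summable_summable)
qed

lemma sums_diagonal_reindex:
  fixes F :: "nat \<Rightarrow> nat \<Rightarrow> real"
  assumes summable: "(\<lambda>(j, k). F j k) summable_on UNIV"
    and inner: "\<And>j. F j sums I j" and outer: "I sums T"
  shows "(\<lambda>m. \<Sum>k\<le>m div 2. F (m - 2 * k) k) sums T"
proof -
  define T' where "T' = infsum (\<lambda>(j, k). F j k) UNIV"
  have T': "((\<lambda>(j, k). F j k) has_sum T') (UNIV \<times> UNIV)"
    using summable by (simp add: T'_def)
  have "(F j has_sum I j) UNIV" for j
  proof -
    have "F j summable_on UNIV"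
      using summable_on_SigmaD1[of F UNIV "\<lambda>_. UNIV" j] summable by simp
    then have "(F j has_sum infsum (F j) UNIV) UNIV"
      by simp
    with inner[of j] show ?thesis
      using has_sum_imp_sums sums_unique2 by metis
  qed
  then have "(I has_sum T') UNIV"
    by (intro has_sum_Sigma'[OF T']) simp
  then have "T' = T"
    using outer has_sum_imp_sums sums_unique2 by blast
  have "((\<lambda>(m, k). F (m - 2 * k) k) has_sum T) (SIGMA m:UNIV. {..m div 2})"
    using T' unfolding \<open>T' = T\<close>
    by (subst (asm) has_sum_reindex_bij_witness[where i = "\<lambda>(m, k). (m - 2 * k, k)"
          and j = "\<lambda>(j, k). (j + 2 * k, k)"]) auto
  then have "((\<lambda>m. \<Sum>k\<le>m div 2. F (m - 2 * k) k) has_sum T) UNIV"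
    by (rule has_sum_Sigma') simp
  then show ?thesis
    by (rule has_sum_imp_sums)
qed

definition gcoef_poly :: "real \<Rightarrow> real \<Rightarrow> nat \<Rightarrow> real" where
  "gcoef_poly c z m =
     (\<Sum>k\<le>m div 2. real (m choose k) * real (m - k) / fact (m - 2 * k) * c ^ (m - 2 * k) * z ^ k)"

lemma gcoef_poly_0 [simp]: "gcoef_poly c z 0 = 0"
  by (simp add: gcoef_poly_def)

lemma gcoef_poly_sums:
  fixes c s :: real
  assumes s: "0 < s" "s < 1"
  shows "(\<lambda>m. gcoef_poly c ((1 - s^2) / 4) m) sums
    (exp (2 * c / (1 + s)) * (c / s^2 + (1 - s^2) / (2 * s^3)))"
proof -
  define z where "z = (1 - s^2) / 4"
  define X where "X = 2 / (1 + s)"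
  define A where "A = (1 + s) / (2 * s^2)"
  define B where "B = (1 - s^2) / (2 * s^3)"
  define F where "F = (\<lambda>x j k. x ^ j / fact j * (real (j + k) * real (j + 2 * k choose k) * z ^ k))"
  have z: "0 \<le> z"
    using s by (simp add: z_def power_le_one)
  have inner: "F x j sums (x ^ j / fact j * (X ^ j * (real j * A + B)))" for x j
    unfolding F_def z_def X_def A_def B_def
    by (intro sums_mult shifted_central_binomial_weighted_sums s)
  have outer: "(\<lambda>j. x ^ j / fact j * (X ^ j * (real j * A + B))) sums (exp (x * X) * (x * X * A + B))"
    for x
    using exp_series_affine_sums[of "x * X" A B] by (simp add: power_mult_distrib mult_ac)
  have "(\<lambda>(j, k). F c j k) summable_on UNIV"
    by (rule summable_on_pairs_by_majorant[OF _ inner[of "\<bar>c\<bar>"] sums_summable[OF outer]])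
       (use z in \<open>simp add: F_def abs_mult power_abs\<close>)
  from sums_diagonal_reindex[OF this inner outer]
  have "(\<lambda>m. \<Sum>k\<le>m div 2. F c (m - 2 * k) k) sums (exp (c * X) * (c * X * A + B))" .
  moreover have "(\<Sum>k\<le>m div 2. F c (m - 2 * k) k) = gcoef_poly c z m" for m
    unfolding gcoef_poly_def
  proof (intro sum.cong refl)
    fix k assume "k \<in> {..m div 2}"
    then have "m - 2 * k + k = m - k" "m - 2 * k + 2 * k = m"
      by auto
    then show "F c (m - 2 * k) k
        = real (m choose k) * real (m - k) / fact (m - 2 * k) * c ^ (m - 2 * k) * z ^ k"
      by (simp add: F_def)
  qed
  moreover have "c * X = 2 * c / (1 + s)" "2 * c / (1 + s) * A = c / s^2"
    using s by (simp_all add: X_def A_def divide_simps)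
  ultimately show ?thesis
    unfolding z_def[symmetric] B_def[symmetric] by (simp only:)
qed

lemma gcoef_poly_scale: "gcoef_poly (c * y) (z * y^2) m = y ^ m * gcoef_poly c z m"
  unfolding gcoef_poly_def sum_distrib_left
proof (intro sum.cong refl)
  fix k assume "k \<in> {..m div 2}"
  then have "y ^ m = y ^ (m - 2 * k) * (y^2) ^ k"
    by (simp add: power_mult[symmetric] power_add[symmetric])
  then show "real (m choose k) * real (m - k) / fact (m - 2 * k) * (c * y) ^ (m - 2 * k) * (z * y^2) ^ k
      = y ^ m * (real (m choose k) * real (m - k) / fact (m - 2 * k) * c ^ (m - 2 * k) * z ^ k)"
    unfolding power_mult_distrib by (simp only: mult_ac)
qed

lemma power_int_minus_one: "b \<noteq> 0 \<Longrightarrow> b powi (int n - 1) = b ^ n / (b :: real)"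
  using power_int_diff[of b "int n" 1] by simp

lemma gcoef_eq_gcoef_poly: "gcoef t = gcoef_poly (pi / 6) 1 (Suc t) / (pi / 6 * (- 4 * sqrt 6) ^ t)"
  unfolding gcoef_def gcoef_poly_def sum_distrib_left sum_divide_distrib atLeast0AtMost
proof (intro sum.cong)
  fix k assume "k \<in> {..Suc t div 2}"
  then have exponent: "int t - 2 * int k = int (Suc t - 2 * k) - 1"
    by auto
  have "(pi / 6) powi (int t - 2 * int k) = (pi / 6) ^ (Suc t - 2 * k) / (pi / 6)"
    unfolding exponent by (rule power_int_minus_one) simp
  then show "1 / (- 4 * sqrt 6) ^ t * (real ((t + 1) choose k) * (real (t + 1 - k) / fact (t + 1 - 2 * k))
        * (pi / 6) powi (int t - 2 * int k))
      = real (Suc t choose k) * real (Suc t - k) / fact (Suc t - 2 * k) * (pi / 6) ^ (Suc t - 2 * k) * 1 ^ k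
        / (pi / 6 * (- 4 * sqrt 6) ^ t)"
    by (simp add: ac_simps)
qed simp

lemma gcoef_series_closed_form:
  fixes b Q R :: real
  assumes R: "0 < R" and Q: "0 < Q" "Q^2 = R^2 - 1" and b: "b \<noteq> 0"
  defines "s \<equiv> Q / R" and "c \<equiv> - b / (2 * R)"
  shows "exp (2 * c / (1 + s)) * (c / s^2 + (1 - s^2) / (2 * s^3)) / c
    = exp (b * Q - b * R) * (R^2 / Q^2 * (1 - 1 / (b * Q)))"
proof -
  have "(R + Q) * (R - Q) = 1"
    using Q by (simp add: algebra_simps power2_eq_square)
  moreover have "(b * Q - b * R) * (R + Q) = - b * ((R + Q) * (R - Q))"
    by (simp add: algebra_simps)
  ultimately have "- b = (b * Q - b * R) * (R + Q)"
    by simp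
  then have exponent: "2 * c / (1 + s) = b * Q - b * R"
    using R Q by (simp add: s_def c_def divide_simps)
  have s_square: "1 - s^2 = 1 / R^2"
    using R Q by (simp add: s_def divide_simps)
  have "c \<noteq> 0" "s \<noteq> 0"
    using R Q b by (simp_all add: c_def s_def)
  then have "(c / s^2 + (1 - s^2) / (2 * s^3)) / c = 1 / s^2 + (1 - s^2) / (2 * c * s^3)"
    by (simp add: add_divide_distrib)
  also have "\<dots> = R^2 / Q^2 - R^2 / (b * Q^3)"
    unfolding s_square using R Q b by (simp add: s_def c_def divide_simps power3_eq_cube power2_eq_square)
  also have "\<dots> = R^2 / Q^2 * (1 - 1 / (b * Q))"
    using Q b by (simp add: field_simps power3_eq_cube power2_eq_square)
  finally show ?thesis
    unfolding exponent by (simp only: times_divide_eq_right[symmetric])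
qed

lemma gcoef_over_sqrt_power:
  fixes x :: real
  assumes "0 < x"
  defines "y \<equiv> - 1 / (2 * sqrt (24 * x))"
  shows "gcoef t / x powr (real t / 2) = gcoef_poly (pi / 6 * y) (y^2) (Suc t) / (pi / 6 * y)"
proof -
  have "x powr (real t / 2) = sqrt x ^ t"
    using assms by (simp add: powr_half_sqrt[symmetric] powr_powr powr_realpow[symmetric] mult.commute)
  moreover have "y \<noteq> 0" "- 4 * sqrt 6 * sqrt x = 1 / y"
    using assms real_sqrt_mult[of 4 "6 * x"] real_sqrt_mult[of 6 x] by (simp_all add: y_def)
  ultimately have "gcoef t / x powr (real t / 2) = gcoef_poly (pi / 6) 1 (Suc t) / (pi / 6 * (1 / y) ^ t)"
    unfolding gcoef_eq_gcoef_poly by (simp flip: power_mult_distrib)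
  also have "\<dots> = gcoef_poly (pi / 6) 1 (Suc t) * y ^ Suc t / (pi / 6 * y)"
    using \<open>y \<noteq> 0\<close> by (simp add: power_one_over field_simps)
  finally show ?thesis
    using gcoef_poly_scale[of "pi / 6" y 1 "Suc t"] by simp
qed

lemma gcoef_series_sums:
  fixes x :: real
  assumes "1 < 24 * x"
  defines "R \<equiv> sqrt (24 * x)" and "Q \<equiv> sqrt (24 * x - 1)"
  shows "(\<lambda>t. gcoef t / x powr (real t / 2)) sums
    (exp (pi / 6 * Q - pi / 6 * R) * (R^2 / Q^2 * (1 - 1 / (pi / 6 * Q))))"
proof -
  define s where "s = Q / R"
  define y where "y = - 1 / (2 * R)"
  define c where "c = pi / 6 * y"
  have R: "0 < R" "R^2 = 24 * x" and Q: "0 < Q" "Q^2 = R^2 - 1"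
    using assms by (simp_all add: R_def Q_def)
  have s: "0 < s" "s < 1"
    using assms by (simp_all add: s_def R_def Q_def)
  have y_square: "y^2 = (1 - s^2) / 4"
    using R Q assms by (simp add: y_def s_def divide_simps)
  have c_eq: "c = - (pi / 6) / (2 * R)"
    by (simp add: c_def y_def)
  have terms: "gcoef t / x powr (real t / 2) = gcoef_poly c ((1 - s^2) / 4) (Suc t) / c" for t
    using gcoef_over_sqrt_power[of x t] assms
    unfolding R_def[symmetric] y_def[symmetric] c_def[symmetric] y_square by simp
  have "(\<lambda>m. gcoef_poly c ((1 - s^2) / 4) m) sums
      (exp (2 * c / (1 + s)) * (c / s^2 + (1 - s^2) / (2 * s^3)))"
    by (rule gcoef_poly_sums[OF s])
  then have "(\<lambda>t. gcoef t / x powr (real t / 2)) sums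
      (exp (2 * c / (1 + s)) * (c / s^2 + (1 - s^2) / (2 * s^3)) / c)"
    unfolding terms by (intro sums_divide) (simp add: sums_Suc_iff)
  then show ?thesis
    unfolding s_def c_eq by (subst (asm) gcoef_series_closed_form[OF R(1) Q]) simp_all
qed

theorem mainTheorem5:
  fixes n :: nat
  assumes "n \<ge> 1"
  shows "summable (\<lambda>t. gcoef t / real n powr (real t / 2)) \<and>
    sqrt 12 * exp (mu n) / (24 * real n - 1) * (1 - 1 / mu n) =
    exp (pi * sqrt (2 * real n / 3)) / (4 * real n * sqrt 3) *
      (\<Sum>t. gcoef t / real n powr (real t / 2))"
proof -
  define R where "R = sqrt (24 * real n)"
  define Q where "Q = sqrt (24 * real n - 1)"
  define b where "b = pi / 6"
  have n: "1 \<le> real n"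
    using assms by simp
  have series: "(\<lambda>t. gcoef t / real n powr (real t / 2)) sums
      (exp (b * Q - b * R) * (R^2 / Q^2 * (1 - 1 / (b * Q))))"
    using gcoef_series_sums[of "real n"] n by (simp add: R_def Q_def b_def)
  have "R^2 = 24 * real n" "Q^2 = 24 * real n - 1"
    using n by (simp_all add: R_def Q_def)
  moreover have "mu n = b * Q"
    by (simp add: mu_def b_def Q_def)
  moreover have "pi * sqrt (2 * real n / 3) = b * R"
    using real_sqrt_divide[of "24 * real n" 36] by (simp add: b_def R_def)
  moreover have "sqrt 12 = 6 / sqrt (3 :: real)"
    using real_sqrt_mult[of 4 3] by (simp add: divide_simps)
  moreover have "exp (b * R) * exp (b * Q - b * R) = exp (b * Q)"
    by (simp flip: exp_add)
  moreover have "6 / sqrt 3 * e / Q^2 * x = e / (R^2 / 6 * sqrt 3) * (R^2 / Q^2 * x)" for e x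
    using n by (simp add: R_def field_simps)
  ultimately show ?thesis
    using series by (simp add: sums_iff sums_summable mult.assoc)
qed

end
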